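(* Let $\mathcal{P}\subset\mathbb{R}^d$ be a generalized permutahedron. For $m\in\mathbb{Z}_{>0}$ let $$\chi_d(\mathcal{P})(m)=\#\{y\in[m]^d:\ \mathcal{P}_y \text{ is a vertex of }\mathcal{P}\},$$ the number of $\mathcal{P}$-generic directions $y$ with $y\in[m]^d=\{1,\dots,m\}^d$. Then $\chi_d(\mathcal{P})(m)$ agrees with a polynomial in $m$ of degree $d$, and for all $m\in\mathbb{Z}_{>0}$ $$(-1)^d\chi_d(\mathcal{P})(-m)=\sum_{y\in[m]^d}\#(\text{vertices of }\mathcal{P}_y).$$
   Context: Directions $y\in(\mathbb{R}^d)^*\cong\mathbb{R}^d$ act by $y(x)=\sum_i y_ix_i$. For a polytope $\mathcal{P}$ the $y$-maximal face is $\mathcal{P}_y=\{x\in\mathcal{P}: y(x)\ge y(x')\ \forall x'\in\mathcal{P}\}$; $y$ is $\mathcal{P}$-generic if $\mathcal{P}_y$ is a single vertex. The normal cone of a face $F$ is $N_\mathcal{P}(F)=\{y:\mathcal{P}_y\supseteq F\}$ and the normal fan $\mathcal{N}(\mathcal{P})$ is the set of all normal cones. The braid fan in $\mathbb{R}^d$ consists of the cones $\{y: y_i=y_j \text{ for } i,j\in T_a;\ y_i\ge y_j \text{ for } i\in T_a,j\in T_b,a<b\}$ for ordered set compositions $(T_1,\dots,T_k)$ of $[d]$; it is the normal fan of the standard permutahedron $\mathrm{conv}\{(\sigma(1),\dots,\sigma(d)):\sigma\in S_d\}$. A polytope $\mathcal{P}\subset\mathbb{R}^d$ is a generalized permutahedron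 if its normal fan is a coarsening of the braid fan, i.e. every cone of $\mathcal{N}(\mathcal{P})$ is a union of braid cones. *)

theory Defs
  imports "HOL-Analysis.Analysis" "HOL-Computational_Algebra.Polynomial"
begin

text \<open>Directions and points both live in real^'d; y(x) = y \<bullet> x.\<close>

definition polytope :: "(real ^ 'd) set \<Rightarrow> bool" where
  "polytope P \<longleftrightarrow> (\<exists>S. finite S \<and> S \<noteq> {} \<and> P = convex hull S)"

definition max_face :: "(real ^ 'd) set \<Rightarrow> real ^ 'd \<Rightarrow> (real ^ 'd) set" where
  "max_face P y = {x \<in> P. \<forall>x'\<in>P. y \<bullet> x' \<le> y \<bullet> x}"

definition generic_dir :: "(real ^ 'd) set \<Rightarrow> real ^ 'd \<Rightarrow> bool" where
  "generic_dir P y \<longleftrightarrow> (\<exists>v. max_face P y = {v})"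

definition vertices :: "(real ^ 'd) set \<Rightarrow> (real ^ 'd) set" where
  "vertices P = {v. v extreme_point_of P}"

definition normal_cone :: "(real ^ 'd) set \<Rightarrow> (real ^ 'd) set \<Rightarrow> (real ^ 'd) set" where
  "normal_cone P F = {y. F \<subseteq> max_face P y}"

text \<open>An ordered set composition (T_1,...,T_k) of the index set is encoded by the
  block-index function f with f ` UNIV = {..<k} (T_{a+1} = f^{-1}(a)).\<close>
definition braid_cone :: "('d \<Rightarrow> nat) \<Rightarrow> (real ^ 'd) set" where
  "braid_cone f = {y. (\<forall>i j. f i = f j \<longrightarrow> y $ i = y $ j) \<and>
                      (\<forall>i j. f i < f j \<longrightarrow> y $ i \<ge> y $ j)}"

definition braid_fan :: "(real ^ ('d::finite)) set set" where
  "braid_fan = {braid_cone f | f k. range f = {..<(k::nat)}}"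

definition gen_permutahedron :: "(real ^ ('d::finite)) set \<Rightarrow> bool" where
  "gen_permutahedron P \<longleftrightarrow> polytope P \<and>
     (\<forall>F. F face_of P \<and> F \<noteq> {} \<longrightarrow>
        (\<exists>C \<subseteq> braid_fan. normal_cone P F = \<Union>C))"

definition grid :: "nat \<Rightarrow> (real ^ 'd) set" where
  "grid m = {y. \<forall>i. y $ i \<in> real ` {1..m}}"

definition chi :: "(real ^ ('d::finite)) set \<Rightarrow> nat \<Rightarrow> nat" where
  "chi P m = card {y \<in> grid m. generic_dir P y}"

end

(*
  Let v be a vertex of the generalized permutahedron P. Its normal cone is convex and a union of
  braid cones, so it is cut out by the inequalities y_i >= y_j that hold on all of it; these form a
  partial order on the coordinates. Then P_y = {v} exactly when y is strictly order preserving, and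
  v lies in P_y exactly when y is weakly order preserving. Summing over the vertices, chi(m) is a sum
  of Stanley's strict order polynomials and the vertex count on the right-hand side is the sum of
  the corresponding weak counts, so the reciprocity is order polynomial reciprocity applied vertex
  by vertex. The degree is exactly d because the right-hand side is at least m^d.
*)

theory Submission
  imports Defs
begin

section \<open>Polynomials through integer points\<close>

lemma interpolating_poly_exists:
  fixes f :: "nat \<Rightarrow> real"
  shows "\<exists>s. degree s \<le> N \<and> (\<forall>k\<le>N. poly s (real k) = f k)"
proof (induction N)
  case 0
  show ?case by (rule exI[of _ "[:f 0:]"]) auto
next
  case (Suc N)
  then obtain s where s: "degree s \<le> N" "\<forall>k\<le>N. poly s (real k) = f k" by blast
  define q where "q = (\<Prod>i\<le>N. [:- real i, 1:])"
  have "degree q \<le> Suc N"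
    using degree_prod_sum_le[of "{..N}" "\<lambda>i. [:- real i, 1:]"] by (simp add: q_def)
  moreover have "poly q (real k) = 0" if "k \<le> N" for k
    unfolding q_def poly_prod using that by (auto intro!: prod_zero)
  moreover have "poly q (real (Suc N)) \<noteq> 0"
    unfolding q_def poly_prod by (auto simp: prod_zero_iff)
  moreover define c where "c = (f (Suc N) - poly s (real (Suc N))) / poly q (real (Suc N))"
  ultimately have "\<forall>k\<le>Suc N. poly (s + smult c q) (real k) = f k"
    using s by (auto simp: le_Suc_eq)
  moreover have "degree (s + smult c q) \<le> Suc N"
    using s(1) \<open>degree q \<le> Suc N\<close> by (intro degree_add_le order.trans[OF degree_smult_le]) auto
  ultimately show ?case by blast
qed

lemma poly_eq_0_if_vanishes_atMost:
  fixes p :: "real poly"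
  assumes "degree p \<le> n" "\<And>k. k \<le> n \<Longrightarrow> poly p (real k) = 0"
  shows "p = 0"
proof (rule ccontr)
  assume p: "p \<noteq> 0"
  have "Suc n = card (real ` {..n})" by (subst card_image) (auto simp: inj_on_def)
  also have "\<dots> \<le> card {x. poly p x = 0}"
    using assms(2) by (intro card_mono poly_roots_finite p) auto
  also have "\<dots> \<le> degree p" by (rule card_poly_roots_bound[OF p])
  finally show False using assms(1) by simp
qed

lemma degree_forward_difference_le:
  fixes s :: "real poly"
  assumes "degree s \<le> Suc n"
  shows "degree (pcompose s [:1, 1:] - s) \<le> n"
proof (rule degree_le, intro allI impI)
  fix i assume "n < i"
  have same_degree: "degree (pcompose s [:1, 1:]) = degree s" by (simp add: degree_pcompose)
  show "coeff (pcompose s [:1, 1:] - s) i = 0"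
  proof (cases "i = degree s")
    case True
    then show ?thesis using same_degree lead_coeff_comp[of "[:1, 1:]" s] by simp
  next
    case False
    then show ?thesis using \<open>n < i\<close> assms same_degree by (simp add: coeff_eq_0)
  qed
qed

text \<open>The difference identity holds at every real point, which is what transports the recursion
  to negative integers.\<close>

lemma poly_summation_exists:
  fixes r :: "real poly" and f :: "nat \<Rightarrow> real"
  assumes "degree r \<le> n" and step: "\<And>m. f (Suc m) = f m + poly r (real m)"
  shows "\<exists>s. degree s \<le> Suc n \<and> (\<forall>x. poly s (x + 1) = poly s x + poly r x)
             \<and> (\<forall>m. poly s (real m) = f m)"
proof -
  obtain s where s: "degree s \<le> Suc n" "\<forall>k\<le>Suc n. poly s (real k) = f k"
    using interpolating_poly_exists by blast
  define D where "D = pcompose s [:1, 1:] - s - r"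
  have poly_D: "poly D x = poly s (x + 1) - poly s x - poly r x" for x
    by (simp add: D_def poly_pcompose add.commute)
  have "D = 0"
  proof (rule poly_eq_0_if_vanishes_atMost)
    show "degree D \<le> n"
      unfolding D_def using degree_forward_difference_le[OF s(1)] assms(1) degree_diff_le by blast
    show "poly D (real k) = 0" if "k \<le> n" for k
    proof -
      have "poly s (real k + 1) = f (Suc k)" using s(2) that by (metis Suc_le_mono le_SucI of_nat_Suc add.commute)
      then show ?thesis using s(2) step[of k] that by (simp add: poly_D)
    qed
  qed
  then have shift: "poly s (x + 1) = poly s x + poly r x" for x
    using poly_D[of x] by simp
  have "poly s (real m) = f m" for m
  proof (induction m)
    case (Suc m)
    then show ?case using shift[of "real m"] step[of m] by (simp add: add.commute)
  qed (use s(2) in auto)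
  then show ?thesis using s(1) shift by blast
qed

lemma abs_poly_le_coeff_sum:
  fixes p :: "real poly"
  assumes "degree p \<le> n" "1 \<le> \<bar>x\<bar>"
  shows "\<bar>poly p x\<bar> \<le> (\<Sum>i\<le>degree p. \<bar>coeff p i\<bar>) * \<bar>x\<bar> ^ n"
proof -
  have "\<bar>poly p x\<bar> \<le> (\<Sum>i\<le>degree p. \<bar>coeff p i * x ^ i\<bar>)"
    unfolding poly_altdef by (rule sum_abs)
  also have "\<dots> \<le> (\<Sum>i\<le>degree p. \<bar>coeff p i\<bar> * \<bar>x\<bar> ^ n)"
    using assms by (intro sum_mono) (auto simp: abs_mult power_abs intro!: mult_left_mono power_increasing)
  finally show ?thesis by (simp add: sum_distrib_right)
qed

lemma degree_ge_if_power_le_abs_poly: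
  fixes p :: "real poly"
  assumes n: "n > 0" and bound: "\<And>m::nat. m > 0 \<Longrightarrow> real m ^ n \<le> \<bar>poly p (- real m)\<bar>"
  shows "n \<le> degree p"
proof (rule ccontr)
  assume "\<not> n \<le> degree p"
  then have deg: "degree p \<le> n - 1" by simp
  define C where "C = (\<Sum>i\<le>degree p. \<bar>coeff p i\<bar>)"
  define m where "m = nat \<lceil>C\<rceil> + 1"
  have "real m > C" "real m \<ge> 1" by (simp_all add: m_def) linarith
  have "real m ^ n \<le> \<bar>poly p (- real m)\<bar>" using bound[of m] by (simp add: m_def)
  also have "\<dots> \<le> C * real m ^ (n - 1)"
    using abs_poly_le_coeff_sum[OF deg, of "- real m"] \<open>real m \<ge> 1\<close> by (simp add: C_def)
  also have "\<dots> < real m * real m ^ (n - 1)"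
    using \<open>real m > C\<close> \<open>real m \<ge> 1\<close> by (intro mult_strict_right_mono) auto
  also have "\<dots> = real m ^ n" using n by (metis Suc_diff_1 power_Suc)
  finally show False by simp
qed

section \<open>Order polynomials and reciprocity\<close>

text \<open>\<open>R i j\<close> reads as \<open>i\<close> above \<open>j\<close>; \<open>Q = (<)\<close> and \<open>Q = (\<le>)\<close> give the strictly and the weakly
  order preserving maps into \<open>{1..m}\<close>.\<close>

definition monotone_maps ::
    "(nat \<Rightarrow> nat \<Rightarrow> bool) \<Rightarrow> ('a \<Rightarrow> 'a \<Rightarrow> bool) \<Rightarrow> 'a set \<Rightarrow> nat \<Rightarrow> ('a \<Rightarrow> nat) set"
  where "monotone_maps Q R I m = {y \<in> PiE I (\<lambda>_. {1..m}). \<forall>i\<in>I. \<forall>j\<in>I. R i j \<longrightarrow> Q (y j) (y i)}"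

definition maximal_elems :: "('a \<Rightarrow> 'a \<Rightarrow> bool) \<Rightarrow> 'a set \<Rightarrow> 'a set"
  where "maximal_elems R I = {i \<in> I. \<forall>k\<in>I. \<not> R k i}"

lemma finite_monotone_maps: "finite I \<Longrightarrow> finite (monotone_maps Q R I m)"
  unfolding monotone_maps_def by (rule finite_subset[of _ "PiE I (\<lambda>_. {1..m})"]) (auto intro: finite_PiE)

lemma card_monotone_maps_empty: "card (monotone_maps Q R {} m) = 1"
  by (simp add: monotone_maps_def)

lemma monotone_maps_0: "I \<noteq> {} \<Longrightarrow> monotone_maps Q R I 0 = {}"
  by (auto simp: monotone_maps_def PiE_iff)

lemma card_monotone_maps_top_fixed:
  assumes M: "M \<subseteq> maximal_elems R I" and N: "N \<le> Suc m" and top: "\<And>a. a \<le> N \<Longrightarrow> Q a (Suc m)"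
  shows "card {y \<in> monotone_maps Q R I (Suc m). (\<forall>i\<in>M. y i = Suc m) \<and> (\<forall>i\<in>I - M. y i \<le> N)}
       = card (monotone_maps Q R (I - M) N)"
    (is "card ?A = card ?B")
proof (rule bij_betw_same_card)
  have MI: "M \<subseteq> I" and not_below: "\<And>i k. i \<in> M \<Longrightarrow> k \<in> I \<Longrightarrow> \<not> R k i"
    using M by (auto simp: maximal_elems_def)
  define extend where "extend z i = (if i \<in> M then Suc m else z i)" for z :: "'a \<Rightarrow> nat" and i
  have "\<forall>y\<in>?A. extend (restrict y (I - M)) = y"
  proof (intro ballI ext)
    fix y i assume y: "y \<in> ?A"
    then have "y \<in> PiE I (\<lambda>_. {1..Suc m})" by (simp add: monotone_maps_def)
    show "extend (restrict y (I - M)) i = y i"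
    proof (cases "i \<in> I")
      case False
      then show ?thesis using PiE_arb[OF \<open>y \<in> PiE I _\<close> False] MI by (auto simp: extend_def)
    qed (use y in \<open>simp add: extend_def\<close>)
  qed
  moreover have "\<forall>z\<in>?B. restrict (extend z) (I - M) = z"
  proof (intro ballI ext)
    fix z i assume "z \<in> ?B"
    then have "z \<in> PiE (I - M) (\<lambda>_. {1..N})" by (simp add: monotone_maps_def)
    then show "restrict (extend z) (I - M) i = z i"
      by (cases "i \<in> I - M") (auto simp: extend_def PiE_arb[of z])
  qed
  moreover have "(\<lambda>y. restrict y (I - M)) ` ?A \<subseteq> ?B"
    by (auto simp: monotone_maps_def PiE_iff)
  moreover have "extend ` ?B \<subseteq> ?A"
  proof
    fix y assume "y \<in> extend ` ?B"
    then obtain z where z: "z \<in> ?B" and y: "y = extend z" by blast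
    have z_range: "z \<in> PiE (I - M) (\<lambda>_. {1..N})"
      and z_mono: "\<forall>i\<in>I - M. \<forall>j\<in>I - M. R i j \<longrightarrow> Q (z j) (z i)"
      using z by (auto simp: monotone_maps_def)
    have "y \<in> PiE I (\<lambda>_. {1..Suc m})"
      using z_range MI N by (auto simp: y extend_def PiE_iff extensional_def intro: le_trans)
    moreover have "Q (y j) (y i)" if "i \<in> I" "j \<in> I" "R i j" for i j
    proof -
      have "j \<notin> M" using not_below \<open>R i j\<close> \<open>i \<in> I\<close> by blast
      then show ?thesis
        using that z_mono top[of "z j"] z_range by (cases "i \<in> M") (auto simp: y extend_def PiE_iff)
    qed
    moreover have "\<forall>i\<in>I - M. y i \<le> N"
      using z_range by (auto simp: y extend_def PiE_iff)
    ultimately show "y \<in> ?A" by (auto simp: y extend_def monotone_maps_def)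
  qed
  ultimately show "bij_betw (\<lambda>y. restrict y (I - M)) ?A ?B"
    by (rule bij_betw_byWitness)
qed

lemma top_level_of_strict_map_subset_maximal:
  assumes "y \<in> monotone_maps (<) R I (Suc m)"
  shows "{i \<in> I. y i = Suc m} \<subseteq> maximal_elems R I"
  using assms by (fastforce simp: monotone_maps_def maximal_elems_def PiE_iff)

lemma card_strict_monotone_maps_Suc:
  assumes "finite I"
  shows "card (monotone_maps (<) R I (Suc m))
       = (\<Sum>M\<in>Pow (maximal_elems R I). card (monotone_maps (<) R (I - M) m))"
proof -
  let ?A = "monotone_maps (<) R I (Suc m)"
  let ?fiber = "\<lambda>M. {y \<in> ?A. {i \<in> I. y i = Suc m} = M}"
  have "card ?A = card (\<Union>M\<in>Pow (maximal_elems R I). ?fiber M)"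
  proof (rule arg_cong[of _ _ card], intro equalityI subsetI)
    fix y assume "y \<in> ?A"
    then show "y \<in> (\<Union>M\<in>Pow (maximal_elems R I). ?fiber M)"
      using top_level_of_strict_map_subset_maximal[of y] by blast
  qed blast
  also have "\<dots> = (\<Sum>M\<in>Pow (maximal_elems R I). card (?fiber M))"
    using assms by (intro card_UN_disjoint) (auto simp: finite_monotone_maps maximal_elems_def)
  also have "\<dots> = (\<Sum>M\<in>Pow (maximal_elems R I). card (monotone_maps (<) R (I - M) m))"
  proof (rule sum.cong[OF refl])
    fix M assume M: "M \<in> Pow (maximal_elems R I)"
    have "{i \<in> I. y i = Suc m} = M \<longleftrightarrow> (\<forall>i\<in>M. y i = Suc m) \<and> (\<forall>i\<in>I - M. y i \<le> m)"
      if "y \<in> ?A" for y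
      using that M by (auto simp: monotone_maps_def maximal_elems_def PiE_iff le_Suc_eq)
        (metis DiffI Suc_n_not_le_n)
    then have "?fiber M = {y \<in> ?A. (\<forall>i\<in>M. y i = Suc m) \<and> (\<forall>i\<in>I - M. y i \<le> m)}"
      by blast
    then show "card (?fiber M) = card (monotone_maps (<) R (I - M) m)"
      using M card_monotone_maps_top_fixed[of M R I m m "(<)"] by simp
  qed
  finally show ?thesis .
qed

lemma sum_Pow_minus_one_power_card:
  assumes "finite T"
  shows "(\<Sum>M\<in>Pow T. (-1::real) ^ card M) = (if T = {} then 1 else 0)"
proof -
  have "(\<Sum>M\<in>Pow T. (-1::real) ^ card M) = (\<Prod>x\<in>T. 1 - 1)"
    using prod_diff_conv_sum[OF assms, of "\<lambda>_. 1::real" "\<lambda>_. 1"] by simp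
  then show ?thesis using assms by (simp add: card_gt_0_iff)
qed

lemma alternating_sum_card_containing:
  assumes "finite S" "finite B" "\<And>y. y \<in> B \<Longrightarrow> T y \<subseteq> S"
  shows "(\<Sum>M\<in>Pow S. (-1) ^ card M * real (card {y \<in> B. M \<subseteq> T y})) = real (card {y \<in> B. T y = {}})"
proof -
  have "(\<Sum>M\<in>Pow S. (-1) ^ card M * real (card {y \<in> B. M \<subseteq> T y}))
      = (\<Sum>M\<in>Pow S. \<Sum>y\<in>B. if M \<subseteq> T y then (-1) ^ card M else 0)"
    using assms(2) by (simp add: sum.If_cases Int_def mult.commute)
  also have "\<dots> = (\<Sum>y\<in>B. \<Sum>M\<in>Pow S. if M \<subseteq> T y then (-1) ^ card M else 0)"
    by (rule sum.swap)
  also have "\<dots> = (\<Sum>y\<in>B. \<Sum>M\<in>Pow (T y). (-1) ^ card M)"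
  proof (rule sum.cong[OF refl])
    fix y assume "y \<in> B"
    then have "Pow (T y) = {M \<in> Pow S. M \<subseteq> T y}" using assms(3) by auto
    then show "(\<Sum>M\<in>Pow S. if M \<subseteq> T y then (-1) ^ card M else 0) = (\<Sum>M\<in>Pow (T y). (-1::real) ^ card M)"
      using assms(1) by (simp add: sum.inter_filter[symmetric])
  qed
  also have "\<dots> = (\<Sum>y\<in>B. if T y = {} then 1 else 0)"
    using assms by (intro sum.cong refl sum_Pow_minus_one_power_card) (meson finite_subset)
  finally show ?thesis using assms(2) by (simp add: sum.If_cases Int_def)
qed

lemma weak_map_top_value_at_maximal:
  fixes h :: "'a \<Rightarrow> 'b::linorder"
  assumes rank: "\<And>i j. R i j \<Longrightarrow> h j < h i" and "finite I"
    and y: "y \<in> monotone_maps (\<le>) R I (Suc m)" and "i \<in> I" "y i = Suc m"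
  shows "\<exists>k\<in>maximal_elems R I. y k = Suc m"
proof -
  let ?X = "{k \<in> I. y k = Suc m}"
  obtain k where k: "k \<in> ?X" and k_max: "\<And>k'. k' \<in> ?X \<Longrightarrow> h k' \<le> h k"
    using Max_in[of "h ` ?X"] Max_ge[of "h ` ?X"] assms(2,4,5) by fastforce
  have "\<not> R k' k" if "k' \<in> I" for k'
  proof
    assume "R k' k"
    with y that k have "k' \<in> ?X" by (force simp: monotone_maps_def PiE_iff)
    then show False using k_max rank[OF \<open>R k' k\<close>] by force
  qed
  then show ?thesis using k by (auto simp: maximal_elems_def)
qed

text \<open>A weak map into \<open>{1..m}\<close> is a weak map into \<open>{1..m+1}\<close> avoiding the top value, and by the
  rank function a map taking the top value takes it at a maximal element.\<close>

lemma weak_monotone_maps_inclusion_exclusion: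
  fixes h :: "'a \<Rightarrow> 'b::linorder"
  assumes rank: "\<And>i j. R i j \<Longrightarrow> h j < h i" and fin: "finite I"
  shows "real (card (monotone_maps (\<le>) R I m))
       = (\<Sum>M\<in>Pow (maximal_elems R I). (-1) ^ card M * real (card (monotone_maps (\<le>) R (I - M) (Suc m))))"
proof -
  let ?B = "monotone_maps (\<le>) R I (Suc m)"
  define T where "T y = {i \<in> maximal_elems R I. y i = Suc m}" for y :: "'a \<Rightarrow> nat"
  have fiber: "card (monotone_maps (\<le>) R (I - M) (Suc m)) = card {y \<in> ?B. M \<subseteq> T y}"
    if "M \<subseteq> maximal_elems R I" for M
  proof -
    have "{y \<in> ?B. M \<subseteq> T y} = {y \<in> ?B. (\<forall>i\<in>M. y i = Suc m) \<and> (\<forall>i\<in>I - M. y i \<le> Suc m)}"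
      using that by (auto simp: T_def monotone_maps_def PiE_iff)
    then show ?thesis using card_monotone_maps_top_fixed[OF that, of "Suc m" m "(\<le>)"] by simp
  qed
  from fiber have "(\<Sum>M\<in>Pow (maximal_elems R I). (-1) ^ card M * real (card (monotone_maps (\<le>) R (I - M) (Suc m))))
      = (\<Sum>M\<in>Pow (maximal_elems R I). (-1) ^ card M * real (card {y \<in> ?B. M \<subseteq> T y}))"
    by (intro sum.cong) auto
  also have "\<dots> = real (card {y \<in> ?B. T y = {}})"
    by (rule alternating_sum_card_containing)
       (use fin in \<open>auto simp: finite_monotone_maps maximal_elems_def T_def\<close>)
  also have "{y \<in> ?B. T y = {}} = monotone_maps (\<le>) R I m"
  proof (intro equalityI subsetI)
    fix y assume y: "y \<in> {y \<in> ?B. T y = {}}"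
    then have "y i \<noteq> Suc m" if "i \<in> I" for i
      using weak_map_top_value_at_maximal[of R h I y m i] rank fin y that by (auto simp: T_def)
    then show "y \<in> monotone_maps (\<le>) R I m"
      using y by (auto simp: monotone_maps_def PiE_iff le_Suc_eq)
  next
    fix y assume "y \<in> monotone_maps (\<le>) R I m"
    then show "y \<in> {y \<in> ?B. T y = {}}"
      by (auto simp: T_def monotone_maps_def PiE_iff maximal_elems_def)
  qed
  finally show ?thesis by simp
qed

definition order_poly :: "('a \<Rightarrow> 'a \<Rightarrow> bool) \<Rightarrow> 'a set \<Rightarrow> real poly \<Rightarrow> bool" where
  "order_poly R I p \<longleftrightarrow> degree p \<le> card I \<and>
     (\<forall>m. poly p (real m) = real (card (monotone_maps (<) R I m))) \<and>
     (\<forall>m. (-1) ^ card I * poly p (- real m) = real (card (monotone_maps (\<le>) R I m)))"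

lemma order_poly_empty: "order_poly R {} 1"
  by (simp add: order_poly_def card_monotone_maps_empty)

lemma card_strict_monotone_maps_Suc_order_polys:
  assumes "finite I" and IH: "\<And>M. M \<in> Pow (maximal_elems R I) - {{}} \<Longrightarrow> order_poly R (I - M) (q M)"
  shows "real (card (monotone_maps (<) R I (Suc m)))
       = real (card (monotone_maps (<) R I m)) + poly (\<Sum>M\<in>Pow (maximal_elems R I) - {{}}. q M) (real m)"
proof -
  have "real (card (monotone_maps (<) R I (Suc m)))
      = (\<Sum>M\<in>Pow (maximal_elems R I). real (card (monotone_maps (<) R (I - M) m)))"
    using card_strict_monotone_maps_Suc[OF assms(1)] by simp
  also have "\<dots> = real (card (monotone_maps (<) R I m))
      + (\<Sum>M\<in>Pow (maximal_elems R I) - {{}}. real (card (monotone_maps (<) R (I - M) m)))"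
    using assms(1) by (subst sum.remove[of _ "{}"]) (auto simp: maximal_elems_def)
  finally show ?thesis using IH by (simp add: poly_sum order_poly_def)
qed

lemma card_weak_monotone_maps_order_polys:
  fixes h :: "'a \<Rightarrow> 'b::linorder"
  assumes rank: "\<And>i j. R i j \<Longrightarrow> h j < h i" and fin: "finite I"
    and IH: "\<And>M. M \<in> Pow (maximal_elems R I) - {{}} \<Longrightarrow> order_poly R (I - M) (q M)"
  shows "real (card (monotone_maps (\<le>) R I m))
       = real (card (monotone_maps (\<le>) R I (Suc m)))
         + (-1) ^ card I * poly (\<Sum>M\<in>Pow (maximal_elems R I) - {{}}. q M) (- real (Suc m))"
proof -
  let ?weak = "\<lambda>J. real (card (monotone_maps (\<le>) R J (Suc m)))"
  have signed_term: "(-1) ^ card M * ?weak (I - M) = (-1) ^ card I * poly (q M) (- real (Suc m))"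
    if M: "M \<in> Pow (maximal_elems R I) - {{}}" for M
  proof -
    have "M \<subseteq> I" using M by (auto simp: maximal_elems_def)
    then have "card I = card M + card (I - M)"
      using fin by (simp add: card_Diff_subset card_mono finite_subset)
    then have "(-1::real) ^ card I = (-1) ^ card M * (-1) ^ card (I - M)"
      by (simp add: power_add)
    moreover have "(-1) ^ card (I - M) * poly (q M) (- real (Suc m)) = ?weak (I - M)"
      using IH[OF M] unfolding order_poly_def by blast
    ultimately show ?thesis by (simp add: mult_ac)
  qed
  have "real (card (monotone_maps (\<le>) R I m)) = (\<Sum>M\<in>Pow (maximal_elems R I). (-1) ^ card M * ?weak (I - M))"
    by (rule weak_monotone_maps_inclusion_exclusion[OF rank fin])
  also have "\<dots> = ?weak I + (\<Sum>M\<in>Pow (maximal_elems R I) - {{}}. (-1) ^ card M * ?weak (I - M))"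
    using fin by (subst sum.remove[of _ "{}"]) (auto simp: maximal_elems_def)
  finally show ?thesis using signed_term by (simp add: poly_sum sum_distrib_left)
qed

lemma order_poly_exists_step:
  fixes h :: "'a \<Rightarrow> 'b::linorder"
  assumes rank: "\<And>i j. R i j \<Longrightarrow> h j < h i" and fin: "finite I" and "I \<noteq> {}"
    and IH: "\<And>M. M \<in> Pow (maximal_elems R I) - {{}} \<Longrightarrow> order_poly R (I - M) (q M)"
  shows "\<exists>p. order_poly R I p"
proof -
  define r where "r = (\<Sum>M\<in>Pow (maximal_elems R I) - {{}}. q M)"
  have "degree r \<le> card I - 1"
    unfolding r_def
  proof (rule degree_sum_le)
    fix M assume M: "M \<in> Pow (maximal_elems R I) - {{}}"
    then have "M \<subseteq> I" "M \<noteq> {}" by (auto simp: maximal_elems_def)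
    then have "card (I - M) < card I" using fin by (intro psubset_card_mono) auto
    moreover have "degree (q M) \<le> card (I - M)" using IH[OF M] by (simp add: order_poly_def)
    ultimately show "degree (q M) \<le> card I - 1" by linarith
  qed (use fin in \<open>simp add: maximal_elems_def\<close>)
  moreover have "real (card (monotone_maps (<) R I (Suc m)))
      = real (card (monotone_maps (<) R I m)) + poly r (real m)" for m
    unfolding r_def by (rule card_strict_monotone_maps_Suc_order_polys[OF fin IH])
  ultimately obtain s where s: "degree s \<le> Suc (card I - 1)" "\<And>x. poly s (x + 1) = poly s x + poly r x"
    "\<And>m. poly s (real m) = real (card (monotone_maps (<) R I m))"
    using poly_summation_exists[of r "card I - 1" "\<lambda>m. real (card (monotone_maps (<) R I m))"]
    by blast
  have "Suc (card I - 1) = card I" using \<open>I \<noteq> {}\<close> fin by (simp add: card_gt_0_iff)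
  have "(-1) ^ card I * poly s (- real m) = real (card (monotone_maps (\<le>) R I m))" for m
  proof (induction m)
    case 0
    show ?case using s(3)[of 0] \<open>I \<noteq> {}\<close> by (simp add: monotone_maps_0)
  next
    case (Suc m)
    then show ?case
      using card_weak_monotone_maps_order_polys[of R h I q m, OF rank fin IH] s(2)[of "- real (Suc m)"]
      by (simp add: r_def algebra_simps)
  qed
  then show ?thesis using s(1,3) \<open>Suc (card I - 1) = card I\<close> by (auto simp: order_poly_def)
qed

theorem order_poly_reciprocity:
  fixes h :: "'a \<Rightarrow> 'b::linorder"
  assumes rank: "\<And>i j. R i j \<Longrightarrow> h j < h i"
  shows "finite I \<Longrightarrow> \<exists>p. order_poly R I p"
proof (induction "card I" arbitrary: I rule: less_induct)
  case less
  show ?case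
  proof (cases "I = {}")
    case True
    then show ?thesis using order_poly_empty by blast
  next
    case False
    have "\<forall>M \<in> Pow (maximal_elems R I) - {{}}. \<exists>p. order_poly R (I - M) p"
    proof
      fix M assume M: "M \<in> Pow (maximal_elems R I) - {{}}"
      show "\<exists>p. order_poly R (I - M) p"
      proof (rule less.hyps)
        show "card (I - M) < card I"
          using M less.prems by (intro psubset_card_mono) (auto simp: maximal_elems_def)
      qed (use less.prems in auto)
    qed
    then obtain q where q: "\<forall>M \<in> Pow (maximal_elems R I) - {{}}. order_poly R (I - M) (q M)"
      by (metis bchoice)
    show ?thesis
    proof (rule order_poly_exists_step[of R h I q, OF rank less.prems False])
      fix M assume "M \<in> Pow (maximal_elems R I) - {{}}"
      then show "order_poly R (I - M) (q M)" using q by (rule bspec[rotated])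
    qed
  qed
qed

section \<open>Maximal faces of polytopes\<close>

lemma eventually_at_right_0_ex:
  "\<forall>\<^sub>F \<epsilon> in at_right (0::real). Q \<epsilon> \<Longrightarrow> \<exists>\<epsilon>>0. \<epsilon> < 1 \<and> Q \<epsilon>"
  using eventually_happens'[OF _ eventually_conj[OF eventually_at_right_real[of 0 1]]] by auto

lemma eventually_at_right_0_affine_pos:
  "0 < (c::real) \<Longrightarrow> \<forall>\<^sub>F \<epsilon> in at_right 0. 0 < c + \<epsilon> * d"
  by (rule order_tendstoD(1)[of _ c]) (auto intro!: tendsto_eq_intros)

lemma eventually_at_right_0_inj_vec_nth:
  fixes y z :: "real ^ 'd"
  assumes "inj (vec_nth z)"
  shows "\<forall>\<^sub>F \<epsilon> in at_right 0. inj (vec_nth (y + \<epsilon> *\<^sub>R z))"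
proof -
  have "\<forall>\<^sub>F \<epsilon> in at_right 0. (y + \<epsilon> *\<^sub>R z) $ a \<noteq> (y + \<epsilon> *\<^sub>R z) $ b" if "a \<noteq> b" for a b
  proof (cases "y $ a = y $ b")
    case True
    then show ?thesis
      using assms that eventually_at_right_less[of "0::real"] by (auto simp: inj_eq elim!: eventually_mono)
  next
    case False
    have "((\<lambda>\<epsilon>. (y + \<epsilon> *\<^sub>R z) $ a - (y + \<epsilon> *\<^sub>R z) $ b) \<longlongrightarrow> y $ a - y $ b) (at_right 0)"
      by (auto intro!: tendsto_eq_intros)
    from tendsto_imp_eventually_ne[OF this, of 0] False show ?thesis
      by (auto elim!: eventually_mono)
  qed
  then have "\<forall>\<^sub>F \<epsilon> in at_right 0. \<forall>ab. fst ab \<noteq> snd ab \<longrightarrow> (y + \<epsilon> *\<^sub>R z) $ fst ab \<noteq> (y + \<epsilon> *\<^sub>R z) $ snd ab"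
    by (intro eventually_all_finite) auto
  then show ?thesis by (rule eventually_mono) (auto simp: inj_def)
qed

lemma max_face_subset: "max_face P y \<subseteq> P"
  by (auto simp: max_face_def)

lemma in_max_face_cone:
  assumes "v \<in> max_face P a" "v \<in> max_face P b" "0 \<le> \<alpha>" "0 \<le> \<beta>"
  shows "v \<in> max_face P (\<alpha> *\<^sub>R a + \<beta> *\<^sub>R b)"
proof -
  have "(\<alpha> *\<^sub>R a + \<beta> *\<^sub>R b) \<bullet> u \<le> (\<alpha> *\<^sub>R a + \<beta> *\<^sub>R b) \<bullet> v" if "u \<in> P" for u
    using assms that unfolding max_face_def
    by (auto simp: inner_add_left intro!: add_mono mult_left_mono)
  then show ?thesis using assms(1) by (auto simp: max_face_def)
qed

lemma in_max_face_limit: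
  assumes "v \<in> P" and ev: "\<forall>\<^sub>F \<epsilon> in at_right 0. v \<in> max_face P (y + \<epsilon> *\<^sub>R z)"
  shows "v \<in> max_face P y"
proof -
  have "y \<bullet> u \<le> y \<bullet> v" if "u \<in> P" for u
  proof -
    have "((\<lambda>\<epsilon>. (y + \<epsilon> *\<^sub>R z) \<bullet> v - (y + \<epsilon> *\<^sub>R z) \<bullet> u) \<longlongrightarrow> y \<bullet> v - y \<bullet> u) (at_right 0)"
      by (auto intro!: tendsto_eq_intros)
    moreover have "\<forall>\<^sub>F \<epsilon> in at_right 0. 0 \<le> (y + \<epsilon> *\<^sub>R z) \<bullet> v - (y + \<epsilon> *\<^sub>R z) \<bullet> u"
      using ev by (rule eventually_mono) (use that in \<open>auto simp: max_face_def\<close>)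
    ultimately show ?thesis using tendsto_lowerbound by fastforce
  qed
  then show ?thesis using \<open>v \<in> P\<close> by (auto simp: max_face_def)
qed

lemma max_face_eq_supporting_hyperplane:
  assumes "P \<subseteq> {x. a \<bullet> x \<le> b}" "F = P \<inter> {x. a \<bullet> x = b}" "F \<noteq> {}"
  shows "max_face P a = F"
proof -
  obtain f where f: "f \<in> P" "a \<bullet> f = b" using assms(2,3) by blast
  show ?thesis
  proof
    show "max_face P a \<subseteq> F"
    proof
      fix x assume "x \<in> max_face P a"
      then have "x \<in> P" "b \<le> a \<bullet> x" using f by (auto simp: max_face_def)
      then show "x \<in> F" using assms(1,2) by fastforce
    qed
    show "F \<subseteq> max_face P a" using assms(1,2) by (auto simp: max_face_def)
  qed
qed

lemma in_max_face_convex_hullI: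
  assumes "P = convex hull S" "v \<in> P" "\<forall>s\<in>S. y \<bullet> s \<le> y \<bullet> v"
  shows "v \<in> max_face P y"
proof -
  have "convex hull S \<subseteq> {x. y \<bullet> x \<le> y \<bullet> v}"
    using assms(3) by (intro hull_minimal convex_halfspace_le) auto
  then show ?thesis using assms(1,2) by (auto simp: max_face_def)
qed

text \<open>For a generalized permutahedron these inequalities cut out the normal cone of \<open>v\<close>.\<close>

definition normal_order :: "(real ^ 'd) set \<Rightarrow> real ^ 'd \<Rightarrow> 'd \<Rightarrow> 'd \<Rightarrow> bool" where
  "normal_order P v i j \<longleftrightarrow> i \<noteq> j \<and> (\<forall>y \<in> normal_cone P {v}. y $ j \<le> y $ i)"

lemma normal_order_iff:
  "normal_order P v i j \<longleftrightarrow> i \<noteq> j \<and> (\<forall>y. v \<in> max_face P y \<longrightarrow> y $ j \<le> y $ i)"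
  by (simp add: normal_order_def normal_cone_def)

context
  fixes P :: "(real ^ 'd::finite) set"
  assumes P: "polytope P"
begin

lemma polytope_compact_convex: "compact P" "convex P" "P \<noteq> {}"
  using P finite_imp_compact_convex_hull by (auto simp: polytope_def)

lemma max_face_face_of: "max_face P y face_of P"
  and max_face_nonempty: "max_face P y \<noteq> {}"
proof -
  have "continuous_on P (\<lambda>x. y \<bullet> x)" by (intro continuous_intros)
  then obtain x0 where x0: "x0 \<in> P" "\<forall>x\<in>P. y \<bullet> x \<le> y \<bullet> x0"
    using continuous_attains_sup[OF polytope_compact_convex(1,3)] by blast
  then have eq: "max_face P y = P \<inter> {x. y \<bullet> x = y \<bullet> x0}"
    unfolding max_face_def by (auto intro: order_antisym)
  show "max_face P y face_of P" unfolding eq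
    by (rule face_of_Int_supporting_hyperplane_le[OF polytope_compact_convex(2)]) (use x0 in auto)
  show "max_face P y \<noteq> {}" unfolding eq using x0 by auto
qed

lemma finite_vertices: "finite (vertices P)"
proof -
  obtain S where "finite S" "P = convex hull S" using P by (auto simp: polytope_def)
  then show ?thesis
    using extreme_point_of_convex_hull by (auto simp: vertices_def intro: finite_subset)
qed

lemma vertices_max_face: "vertices (max_face P y) = {v \<in> vertices P. v \<in> max_face P y}"
  unfolding vertices_def using extreme_point_of_face[OF max_face_face_of] by blast

lemma vertices_max_face_nonempty: "vertices (max_face P y) \<noteq> {}"
proof -
  have "compact (max_face P y)" "convex (max_face P y)"
    using face_of_imp_compact[OF polytope_compact_convex(2,1) max_face_face_of]
      face_of_imp_convex[OF max_face_face_of] by auto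
  then have "max_face P y = convex hull vertices (max_face P y)"
    unfolding vertices_def by (rule Krein_Milman_Minkowski)
  then show ?thesis using max_face_nonempty by auto
qed

lemma vertex_iff_max_face_singleton: "(\<exists>y. max_face P y = {v}) \<longleftrightarrow> v \<in> vertices P"
proof
  assume "\<exists>y. max_face P y = {v}"
  then obtain y where "max_face P y = {v}" by blast
  then show "v \<in> vertices P" using max_face_face_of[of y] by (simp add: vertices_def face_of_singleton)
next
  assume "v \<in> vertices P"
  obtain S where S: "finite S" "P = convex hull S" using P by (auto simp: polytope_def)
  then have "polyhedron P" using polytope_imp_polyhedron unfolding Polytope.polytope_def by blast
  moreover have "{v} face_of P" using \<open>v \<in> vertices P\<close> by (simp add: vertices_def face_of_singleton)
  ultimately have "{v} exposed_face_of P" using exposed_face_of_polyhedron by blast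
  then obtain a b where "P \<subseteq> {x. a \<bullet> x \<le> b}" "{v} = P \<inter> {x. a \<bullet> x = b}"
    unfolding exposed_face_of_def by blast
  then have "max_face P a = {v}" by (intro max_face_eq_supporting_hyperplane) auto
  then show "\<exists>y. max_face P y = {v}" by blast
qed

lemma eventually_in_max_face_perturbed:
  assumes z: "max_face P z = {v}"
  shows "\<forall>\<^sub>F \<epsilon> in at_right 0. v \<in> max_face P (z + \<epsilon> *\<^sub>R w)"
proof -
  obtain S where S: "finite S" "P = convex hull S" using P by (auto simp: polytope_def)
  have "v \<in> P" using z max_face_subset by blast
  have "z \<bullet> s < z \<bullet> v" if "s \<in> S - {v}" for s
  proof -
    have "s \<in> P" "s \<notin> max_face P z" using that S(2) z hull_subset[of S convex] by auto
    then obtain x where "x \<in> P" "z \<bullet> s < z \<bullet> x" by (auto simp: max_face_def not_le)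
    moreover have "v \<in> max_face P z" using z by simp
    ultimately show ?thesis by (fastforce simp: max_face_def)
  qed
  then have "\<forall>s\<in>S - {v}. \<forall>\<^sub>F \<epsilon> in at_right 0. 0 < (z \<bullet> v - z \<bullet> s) + \<epsilon> * (w \<bullet> v - w \<bullet> s)"
    by (auto intro: eventually_at_right_0_affine_pos)
  then have "\<forall>\<^sub>F \<epsilon> in at_right 0. \<forall>s\<in>S - {v}. 0 < (z \<bullet> v - z \<bullet> s) + \<epsilon> * (w \<bullet> v - w \<bullet> s)"
    using S(1) by (simp add: eventually_ball_finite_distrib)
  then show ?thesis
  proof (rule eventually_mono)
    fix \<epsilon> assume gap: "\<forall>s\<in>S - {v}. 0 < (z \<bullet> v - z \<bullet> s) + \<epsilon> * (w \<bullet> v - w \<bullet> s)"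
    have "(z + \<epsilon> *\<^sub>R w) \<bullet> s \<le> (z + \<epsilon> *\<^sub>R w) \<bullet> v" if "s \<in> S" for s
      using gap that by (cases "s = v") (auto simp: inner_add_left algebra_simps intro: less_imp_le)
    then have "\<forall>s\<in>S. (z + \<epsilon> *\<^sub>R w) \<bullet> s \<le> (z + \<epsilon> *\<^sub>R w) \<bullet> v" by blast
    then show "v \<in> max_face P (z + \<epsilon> *\<^sub>R w)" by (rule in_max_face_convex_hullI[OF S(2) \<open>v \<in> P\<close>])
  qed
qed

lemma normal_order_strict_if_max_face_singleton:
  assumes y: "max_face P y = {v}" and "normal_order P v i j"
  shows "y $ j < y $ i"
proof -
  have "i \<noteq> j" and ord: "\<And>x. v \<in> max_face P x \<Longrightarrow> x $ j \<le> x $ i"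
    using assms(2) by (auto simp: normal_order_iff)
  obtain \<epsilon> where "\<epsilon> > 0" "v \<in> max_face P (y + \<epsilon> *\<^sub>R (axis j 1 - axis i 1))"
    using eventually_at_right_0_ex[OF eventually_in_max_face_perturbed[OF y]] by blast
  then show ?thesis using ord \<open>i \<noteq> j\<close> by (fastforce simp: axis_def)
qed

text \<open>Perturbing an exposing direction by a small multiple of \<open>(to_nat i)\<^sub>i\<close> separates all coordinates.\<close>

lemma vertex_in_max_face_inj_direction:
  assumes "v \<in> vertices P"
  shows "\<exists>z. v \<in> max_face P z \<and> inj (vec_nth z)"
proof -
  obtain z where z: "max_face P z = {v}" using assms vertex_iff_max_face_singleton by blast
  define w :: "real ^ 'd" where "w = (\<chi> k. real (to_nat k))"
  have "inj (vec_nth w)" by (auto simp: w_def inj_def dest: injD[OF inj_to_nat])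
  then obtain \<epsilon> where "v \<in> max_face P (z + \<epsilon> *\<^sub>R w)" "inj (vec_nth (z + \<epsilon> *\<^sub>R w))"
    using eventually_at_right_0_ex[OF eventually_conj[OF eventually_in_max_face_perturbed[OF z]
        eventually_at_right_0_inj_vec_nth]] by blast
  then show ?thesis by blast
qed

end

section \<open>Normal cones of generalized permutahedra\<close>

lemma braid_cone_order_refinement:
  assumes "y \<in> braid_cone f" and refine: "\<And>a b. y $ b \<le> y $ a \<Longrightarrow> y' $ b \<le> y' $ a"
  shows "y' \<in> braid_cone f"
proof -
  have "y' $ i = y' $ j" if "y $ i = y $ j" for i j
    using refine[of i j] refine[of j i] that by simp
  moreover have "y' $ j \<le> y' $ i" if "y $ j \<le> y $ i" for i j
    using refine that by blast
  ultimately show ?thesis using assms(1) unfolding braid_cone_def by blast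
qed

text \<open>When \<open>i\<close> and \<open>j\<close> are adjacent in the order of \<open>f\<close>, swapping them reverses no other pair, and
  replacing both by their average ties no other pair.\<close>

lemma adjacent_transpose_orders:
  fixes f :: "'a \<Rightarrow> real"
  assumes inj: "inj f" and ji: "f j < f i" and adj: "\<And>k. \<not> (f j < f k \<and> f k < f i)"
  defines "g \<equiv> f \<circ> Transposition.transpose i j"
    and "merged \<equiv> \<lambda>k. if k = i \<or> k = j then (f i + f j) / 2 else f k"
  shows "g b < g a \<Longrightarrow> (a, b) \<noteq> (j, i) \<Longrightarrow> f b < f a \<and> (a, b) \<noteq> (i, j)"
    and "f b \<le> f a \<Longrightarrow> merged b \<le> merged a"
    and "g a < g b \<Longrightarrow> (a, b) \<noteq> (i, j) \<Longrightarrow> merged a < merged b"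
proof -
  have "i \<noteq> j" using ji by auto
  have dist: "\<And>a b. a \<noteq> b \<Longrightarrow> f a \<noteq> f b" using inj by (auto simp: inj_def)
  note facts = dist[of a b] dist[of a i] dist[of a j] dist[of b i] dist[of b j] adj[of a] adj[of b]
    \<open>i \<noteq> j\<close> ji
  show "g b < g a \<Longrightarrow> (a, b) \<noteq> (j, i) \<Longrightarrow> f b < f a \<and> (a, b) \<noteq> (i, j)"
    using facts unfolding g_def comp_def Transposition.transpose_def by (auto split: if_splits)
  show "f b \<le> f a \<Longrightarrow> merged b \<le> merged a"
    using facts unfolding merged_def by (auto split: if_splits)
  show "g a < g b \<Longrightarrow> (a, b) \<noteq> (i, j) \<Longrightarrow> merged a < merged b"
    using facts unfolding g_def merged_def comp_def Transposition.transpose_def by (auto split: if_splits)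
qed

definition inversions :: "real ^ 'd \<Rightarrow> real ^ 'd \<Rightarrow> ('d \<times> 'd) set" where
  "inversions z y = {(i, j). z $ j < z $ i \<and> y $ i < y $ j}"

lemma inversion_min_gap_adjacent:
  assumes "is_arg_min (\<lambda>(a, b). z $ a - z $ b) (\<lambda>ab. ab \<in> inversions z y) (i, j)"
  shows "\<not> (z $ j < z $ k \<and> z $ k < z $ i)"
proof
  assume k: "z $ j < z $ k \<and> z $ k < z $ i"
  have ij: "z $ j < z $ i" "y $ i < y $ j" using assms by (auto simp: is_arg_min_def inversions_def)
  have "(i, k) \<in> inversions z y \<or> (k, j) \<in> inversions z y"
    using k ij by (auto simp: inversions_def)
  moreover have "z $ i - z $ k < z $ i - z $ j" "z $ k - z $ j < z $ i - z $ j" using k by auto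
  ultimately show False using assms unfolding is_arg_min_def by fastforce
qed

lemma inversions_adjacent_transpose_psubset:
  assumes inj: "inj (vec_nth z)" and ij: "(i, j) \<in> inversions z y"
    and adj: "\<And>k. \<not> (z $ j < z $ k \<and> z $ k < z $ i)"
  shows "inversions (\<chi> k. z $ Transposition.transpose i j k) y \<subset> inversions z y"
proof -
  have "z $ j < z $ i" "y $ i < y $ j" using ij by (auto simp: inversions_def)
  note orders = adjacent_transpose_orders[of "vec_nth z", OF inj \<open>z $ j < z $ i\<close> adj]
  have "inversions (\<chi> k. z $ Transposition.transpose i j k) y \<subseteq> inversions z y - {(i, j)}"
  proof
    fix ab assume "ab \<in> inversions (\<chi> k. z $ Transposition.transpose i j k) y"
    moreover obtain a b where "ab = (a, b)" by fastforce
    ultimately have "z $ Transposition.transpose i j b < z $ Transposition.transpose i j a"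
      "y $ a < y $ b" by (auto simp: inversions_def)
    moreover have "(a, b) \<noteq> (j, i)" using \<open>y $ a < y $ b\<close> \<open>y $ i < y $ j\<close> by auto
    ultimately show "ab \<in> inversions z y - {(i, j)}"
      using orders(1)[of b a] \<open>ab = (a, b)\<close> by (auto simp: inversions_def)
  qed
  then show ?thesis using ij by blast
qed

context
  fixes P :: "(real ^ 'd::finite) set"
  assumes GP: "gen_permutahedron P"
begin

lemma polytope_gen_permutahedron: "polytope P"
  using GP by (simp add: gen_permutahedron_def)

text \<open>This is the only place where the braid fan enters: the normal cone of \<open>P\<^sub>y\<close> contains the
  braid cone through \<open>y\<close>, which contains every direction whose order refines that of \<open>y\<close>.\<close>

lemma max_face_order_refinement:
  assumes "\<And>a b. y $ b \<le> y $ a \<Longrightarrow> y' $ b \<le> y' $ a"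
  shows "max_face P y \<subseteq> max_face P y'"
proof -
  let ?F = "max_face P y"
  have "?F face_of P" "?F \<noteq> {}"
    using max_face_face_of max_face_nonempty polytope_gen_permutahedron by auto
  then obtain C where C: "C \<subseteq> braid_fan" "normal_cone P ?F = \<Union>C"
    using GP unfolding gen_permutahedron_def by blast
  have "y \<in> normal_cone P ?F" by (simp add: normal_cone_def)
  then obtain c where "c \<in> C" "y \<in> c" using C(2) by blast
  moreover obtain f where "c = braid_cone f"
    using \<open>c \<in> C\<close> C(1) unfolding braid_fan_def by blast
  ultimately have "y' \<in> normal_cone P ?F"
    using C(2) braid_cone_order_refinement[OF _ assms] by blast
  then show ?thesis by (simp add: normal_cone_def)
qed

text \<open>Tie \<open>i\<close> and \<open>j\<close> by averaging (a coarsening of the order of \<open>z\<close>), then tilt slightly towards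
  \<open>x\<close>: the resulting direction puts \<open>i\<close> below \<open>j\<close>, keeps \<open>v\<close> in its maximal face by convexity of
  the normal cone, and its order is refined by the swapped \<open>z\<close>.\<close>

lemma in_max_face_adjacent_transpose:
  assumes zv: "v \<in> max_face P z" and inj: "inj (vec_nth z)" and ji: "z $ j < z $ i"
    and adj: "\<And>k. \<not> (z $ j < z $ k \<and> z $ k < z $ i)"
    and xv: "v \<in> max_face P x" and xij: "x $ i < x $ j"
  shows "v \<in> max_face P (\<chi> k. z $ Transposition.transpose i j k)"
proof -
  let ?z' = "\<chi> k. z $ Transposition.transpose i j k"
  define p :: "real ^ 'd" where "p = (\<chi> k. if k = i \<or> k = j then (z $ i + z $ j) / 2 else z $ k)"
  note orders = adjacent_transpose_orders[of "vec_nth z", OF inj ji adj]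
  have pv: "v \<in> max_face P p"
    using max_face_order_refinement[of z p] orders(2) zv by (auto simp: p_def)
  have "\<forall>\<^sub>F \<epsilon> in at_right 0. \<forall>ab. p $ snd ab < p $ fst ab \<longrightarrow>
      0 < (p $ fst ab - p $ snd ab) + \<epsilon> * ((x $ fst ab - x $ snd ab) - (p $ fst ab - p $ snd ab))"
    by (intro eventually_all_finite) (auto intro: eventually_at_right_0_affine_pos)
  then obtain \<epsilon> where \<epsilon>: "0 < \<epsilon>" "\<epsilon> < 1" and strict: "\<forall>ab. p $ snd ab < p $ fst ab \<longrightarrow>
      0 < (p $ fst ab - p $ snd ab) + \<epsilon> * ((x $ fst ab - x $ snd ab) - (p $ fst ab - p $ snd ab))"
    by (blast dest: eventually_at_right_0_ex)
  have keeps_strict: "0 < (p $ a - p $ b) + \<epsilon> * ((x $ a - x $ b) - (p $ a - p $ b))"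
    if "p $ b < p $ a" for a b
    using strict that by (metis fst_conv snd_conv)
  define q where "q = (1 - \<epsilon>) *\<^sub>R p + \<epsilon> *\<^sub>R x"
  have "max_face P q \<subseteq> max_face P ?z'"
  proof (rule max_face_order_refinement)
    fix a b assume qab: "q $ b \<le> q $ a"
    show "?z' $ b \<le> ?z' $ a"
    proof (rule ccontr)
      assume "\<not> ?z' $ b \<le> ?z' $ a"
      then have z'ab: "z $ Transposition.transpose i j a < z $ Transposition.transpose i j b" by simp
      show False
      proof (cases "(a, b) = (i, j)")
        case True
        then show False using qab xij \<epsilon>(1) by (simp add: q_def p_def algebra_simps)
      next
        case False
        then have "p $ a < p $ b" using orders(3) z'ab by (simp add: p_def)
        then have "0 < (p $ b - p $ a) + \<epsilon> * ((x $ b - x $ a) - (p $ b - p $ a))"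
          by (rule keeps_strict)
        with qab show False by (simp add: q_def algebra_simps)
      qed
    qed
  qed
  moreover have "v \<in> max_face P q"
    unfolding q_def using pv xv \<epsilon> by (intro in_max_face_cone) auto
  ultimately show ?thesis by blast
qed

text \<open>Bubble sort: moving \<open>z\<close> towards \<open>y\<close> by adjacent transpositions keeps \<open>v\<close> in the maximal
  face, since a transposition leaving the normal cone would witness a relation \<open>normal_order P v i j\<close>
  that \<open>y\<close> violates.\<close>

lemma in_max_face_if_strictly_respects_normal_order:
  assumes y: "\<And>i j. normal_order P v i j \<Longrightarrow> y $ j < y $ i"
  shows "v \<in> max_face P z \<Longrightarrow> inj (vec_nth z) \<Longrightarrow> v \<in> max_face P y"
proof (induction "card (inversions z y)" arbitrary: z rule: less_induct)
  case less
  show ?case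
  proof (cases "inversions z y = {}")
    case True
    have "max_face P z \<subseteq> max_face P y"
    proof (rule max_face_order_refinement)
      fix a b assume "z $ b \<le> z $ a"
      moreover have "a \<noteq> b \<Longrightarrow> z $ b \<noteq> z $ a" using less.prems(2) by (auto dest: injD)
      ultimately show "y $ b \<le> y $ a"
        using True by (cases "a = b") (force simp: inversions_def not_less)+
    qed
    then show ?thesis using less.prems(1) by blast
  next
    case False
    then obtain i j where min: "is_arg_min (\<lambda>(a, b). z $ a - z $ b) (\<lambda>ab. ab \<in> inversions z y) (i, j)"
      using ex_is_arg_min_if_finite[of "inversions z y" "\<lambda>(a, b). z $ a - z $ b"] by fastforce
    then have ij: "(i, j) \<in> inversions z y" by (simp add: is_arg_min_def)
    note adj = inversion_min_gap_adjacent[OF min]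
    let ?z' = "\<chi> k. z $ Transposition.transpose i j k"
    have "v \<in> max_face P ?z'"
    proof (rule ccontr)
      assume "v \<notin> max_face P ?z'"
      have "z $ j < z $ i" using ij by (simp add: inversions_def)
      have "x $ j \<le> x $ i" if "v \<in> max_face P x" for x
        using in_max_face_adjacent_transpose[OF less.prems \<open>z $ j < z $ i\<close> adj that]
          \<open>v \<notin> max_face P ?z'\<close> by (meson not_le)
      then have "normal_order P v i j"
        using \<open>z $ j < z $ i\<close> by (auto simp: normal_order_iff)
      then show False using y ij by (fastforce simp: inversions_def)
    qed
    moreover have "inj (vec_nth ?z')"
    proof -
      have "vec_nth ?z' = vec_nth z \<circ> Transposition.transpose i j" by auto
      then show ?thesis using less.prems(2) inj_transpose by (metis inj_compose)
    qed
    moreover have "card (inversions ?z' y) < card (inversions z y)"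
      using inversions_adjacent_transpose_psubset[OF less.prems(2) ij adj] by (simp add: psubset_card_mono)
    ultimately show ?thesis using less.hyps by blast
  qed
qed

lemma in_max_face_iff_normal_order:
  assumes v: "v \<in> vertices P"
  shows "v \<in> max_face P y \<longleftrightarrow> (\<forall>i j. normal_order P v i j \<longrightarrow> y $ j \<le> y $ i)"
proof
  assume weak: "\<forall>i j. normal_order P v i j \<longrightarrow> y $ j \<le> y $ i"
  obtain z where zv: "v \<in> max_face P z" and z_inj: "inj (vec_nth z)"
    using vertex_in_max_face_inj_direction[OF polytope_gen_permutahedron v] by blast
  have z_strict: "z $ j < z $ i" if "normal_order P v i j" for i j
    using that zv z_inj by (force simp: normal_order_iff inj_eq order_less_le)
  have "\<forall>\<^sub>F \<epsilon> in at_right 0. v \<in> max_face P (y + \<epsilon> *\<^sub>R z)"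
    using eventually_conj[OF eventually_at_right_0_inj_vec_nth[OF z_inj] eventually_at_right_less]
  proof (rule eventually_mono)
    fix \<epsilon> :: real assume \<epsilon>: "inj (vec_nth (y + \<epsilon> *\<^sub>R z)) \<and> 0 < \<epsilon>"
    have "(y + \<epsilon> *\<^sub>R z) $ j < (y + \<epsilon> *\<^sub>R z) $ i" if "normal_order P v i j" for i j
      using weak z_strict[OF that] that \<epsilon> by (simp add: add_le_less_mono)
    then show "v \<in> max_face P (y + \<epsilon> *\<^sub>R z)"
      using in_max_face_if_strictly_respects_normal_order zv z_inj by blast
  qed
  then show "v \<in> max_face P y"
    using zv max_face_subset by (blast intro: in_max_face_limit)
qed (auto simp: normal_order_iff)

lemma max_face_eq_singleton_iff_normal_order:
  assumes v: "v \<in> vertices P"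
  shows "max_face P y = {v} \<longleftrightarrow> (\<forall>i j. normal_order P v i j \<longrightarrow> y $ j < y $ i)"
proof
  assume strict: "\<forall>i j. normal_order P v i j \<longrightarrow> y $ j < y $ i"
  then have vy: "v \<in> max_face P y"
    using in_max_face_iff_normal_order[OF v] by (auto intro: less_imp_le)
  have "u = v" if u: "u \<in> max_face P y" for u
  proof -
    have "\<forall>\<^sub>F \<epsilon> in at_right 0. \<forall>ij. normal_order P v (fst ij) (snd ij) \<longrightarrow>
        0 < (y $ fst ij - y $ snd ij) + \<epsilon> * ((u - v) $ fst ij - (u - v) $ snd ij)"
      using strict by (intro eventually_all_finite) (auto intro: eventually_at_right_0_affine_pos)
    then obtain \<epsilon> where "\<epsilon> > 0" and "\<forall>ij. normal_order P v (fst ij) (snd ij) \<longrightarrow>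
        0 < (y $ fst ij - y $ snd ij) + \<epsilon> * ((u - v) $ fst ij - (u - v) $ snd ij)"
      by (blast dest: eventually_at_right_0_ex)
    then have "v \<in> max_face P (y + \<epsilon> *\<^sub>R (u - v))"
      unfolding in_max_face_iff_normal_order[OF v] by (force simp: algebra_simps)
    moreover have "u \<in> P" "y \<bullet> u = y \<bullet> v"
      using u vy by (auto simp: max_face_def intro: order_antisym)
    ultimately have "\<epsilon> * ((u - v) \<bullet> (u - v)) \<le> 0"
      by (auto simp: max_face_def inner_add_left inner_diff_left inner_diff_right algebra_simps)
    then have "(u - v) \<bullet> (u - v) \<le> 0" using \<open>\<epsilon> > 0\<close> by (simp add: mult_le_0_iff)
    then show "u = v" by (metis inner_eq_zero_iff inner_ge_zero order_antisym eq_iff_diff_eq_0)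
  qed
  then show "max_face P y = {v}" using vy by blast
qed (use normal_order_strict_if_max_face_singleton[OF polytope_gen_permutahedron] in blast)

end

section \<open>Counting directions in the grid\<close>

lemma bij_betw_grid:
  "bij_betw (\<lambda>f. \<chi> i. real (f i)) (PiE UNIV (\<lambda>_. {1..m})) (grid m :: (real ^ 'd::finite) set)"
proof (rule bij_betw_imageI)
  show "inj_on (\<lambda>f. \<chi> i. real (f i) :: real ^ 'd) (PiE UNIV (\<lambda>_. {1..m}))"
    by (rule inj_onI) (simp add: vec_eq_iff fun_eq_iff)
  show "(\<lambda>f. \<chi> i. real (f i)) ` PiE UNIV (\<lambda>_. {1..m}) = (grid m :: (real ^ 'd) set)"
  proof (intro equalityI subsetI)
    fix y :: "real ^ 'd" assume "y \<in> grid m"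
    then have "\<forall>i. \<exists>k\<in>{1..m}. y $ i = real k" by (auto simp: grid_def)
    then obtain f where "\<forall>i. f i \<in> {1..m} \<and> y $ i = real (f i)" by metis
    then show "y \<in> (\<lambda>f. \<chi> i. real (f i)) ` PiE UNIV (\<lambda>_. {1..m})"
      by (intro image_eqI[of _ _ f]) (auto simp: vec_eq_iff)
  qed (auto simp: grid_def PiE_iff)
qed

lemma finite_grid: "finite (grid m :: (real ^ 'd::finite) set)"
proof -
  have "finite (PiE (UNIV :: 'd set) (\<lambda>_. {1..m}))" by (simp add: finite_PiE)
  then show ?thesis using bij_betw_finite[OF bij_betw_grid[where m = m and 'd = 'd]] by blast
qed

lemma card_grid: "card (grid m :: (real ^ 'd::finite) set) = m ^ CARD('d)"
proof -
  have "card (PiE (UNIV :: 'd set) (\<lambda>_. {1..m})) = m ^ CARD('d)" by (simp add: card_PiE)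
  then show ?thesis using bij_betw_same_card[OF bij_betw_grid[where m = m and 'd = 'd]] by simp
qed

lemma card_grid_filter:
  "card {y \<in> grid m. Q y} = card {f \<in> PiE UNIV (\<lambda>_. {1..m}). Q (\<chi> i. real (f i) :: real ^ 'd::finite)}"
proof -
  let ?g = "\<lambda>f. \<chi> i. real (f i) :: real ^ 'd"
  have "bij_betw ?g (PiE UNIV (\<lambda>_. {1..m})) (grid m)" by (rule bij_betw_grid)
  then have "grid m = ?g ` PiE UNIV (\<lambda>_. {1..m})" and inj: "inj_on ?g (PiE UNIV (\<lambda>_. {1..m}))"
    by (simp_all add: bij_betw_def)
  then have "{y \<in> grid m. Q y} = ?g ` {f \<in> PiE UNIV (\<lambda>_. {1..m}). Q (?g f)}"
    by (simp only: Compr_image_eq)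
  moreover have "inj_on ?g {f \<in> PiE UNIV (\<lambda>_. {1..m}). Q (?g f)}"
    using inj by (rule inj_on_subset) blast
  ultimately show ?thesis by (simp add: card_image)
qed

context
  fixes P :: "(real ^ 'd::finite) set"
  assumes P: "polytope P"
begin

lemma chi_eq_sum_vertices: "chi P m = (\<Sum>v\<in>vertices P. card {y \<in> grid m. max_face P y = {v}})"
proof -
  have eq: "{y \<in> grid m. generic_dir P y} = (\<Union>v\<in>vertices P. {y \<in> grid m. max_face P y = {v}})"
    using vertex_iff_max_face_singleton[OF P] by (auto simp: generic_dir_def)
  show ?thesis unfolding chi_def eq
    by (rule card_UN_disjoint) (auto simp: finite_vertices[OF P] finite_grid)
qed

lemma sum_card_vertices_max_face:
  "(\<Sum>y\<in>grid m. card (vertices (max_face P y))) = (\<Sum>v\<in>vertices P. card {y \<in> grid m. v \<in> max_face P y})"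
proof -
  have "(\<Sum>y\<in>grid m. card (vertices (max_face P y))) = (\<Sum>y\<in>grid m. \<Sum>v\<in>vertices P. if v \<in> max_face P y then 1 else 0)"
    by (simp add: vertices_max_face[OF P] finite_vertices[OF P] sum.If_cases Int_def)
  also have "\<dots> = (\<Sum>v\<in>vertices P. card {y \<in> grid m. v \<in> max_face P y})"
    by (subst sum.swap) (simp add: sum.If_cases Int_def finite_grid)
  finally show ?thesis .
qed

lemma power_le_sum_card_vertices_max_face:
  "m ^ CARD('d) \<le> (\<Sum>y\<in>grid m. card (vertices (max_face P y)))"
proof -
  have "(\<Sum>y\<in>(grid m :: (real ^ 'd) set). 1::nat) \<le> (\<Sum>y\<in>grid m. card (vertices (max_face P y)))"
    using vertices_max_face_nonempty[OF P] finite_vertices[OF P]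
    by (intro sum_mono) (simp add: Suc_le_eq card_gt_0_iff vertices_max_face[OF P])
  then show ?thesis by (simp add: card_grid)
qed

end

context
  fixes P :: "(real ^ 'd::finite) set"
  assumes GP: "gen_permutahedron P"
begin

lemma card_grid_max_face_eq_singleton:
  assumes "v \<in> vertices P"
  shows "card {y \<in> grid m. max_face P y = {v}} = card (monotone_maps (<) (normal_order P v) UNIV m)"
  unfolding card_grid_filter monotone_maps_def
  using max_face_eq_singleton_iff_normal_order[OF GP assms] by simp

lemma card_grid_in_max_face:
  assumes "v \<in> vertices P"
  shows "card {y \<in> grid m. v \<in> max_face P y} = card (monotone_maps (\<le>) (normal_order P v) UNIV m)"
  unfolding card_grid_filter monotone_maps_def
  using in_max_face_iff_normal_order[OF GP assms] by simp

lemma vertex_order_poly_exists: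
  assumes "v \<in> vertices P"
  shows "\<exists>p. order_poly (normal_order P v) UNIV p"
proof -
  obtain z where "max_face P z = {v}"
    using assms vertex_iff_max_face_singleton[OF polytope_gen_permutahedron[OF GP]] by blast
  then have "\<And>i j. normal_order P v i j \<Longrightarrow> z $ j < z $ i"
    using normal_order_strict_if_max_face_singleton[OF polytope_gen_permutahedron[OF GP]] by blast
  then show ?thesis using order_poly_reciprocity[of "normal_order P v" "vec_nth z" "UNIV :: 'd set"] by simp
qed

end

theorem mainTheorem6:
  fixes P :: "(real ^ 'd::finite) set"
  assumes "gen_permutahedron P"
  shows "\<exists>p :: real poly. degree p = CARD('d) \<and>
           (\<forall>m::nat. m > 0 \<longrightarrow> real (chi P m) = poly p (real m)) \<and>
           (\<forall>m::nat. m > 0 \<longrightarrow>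
              (-1) ^ CARD('d) * poly p (- real m) =
              real (\<Sum>y\<in>grid m. card (vertices (max_face P y))))"
proof -
  note P = polytope_gen_permutahedron[OF assms]
  have "\<forall>v\<in>vertices P. \<exists>p. order_poly (normal_order P v) UNIV p"
    using vertex_order_poly_exists[OF assms] by blast
  then obtain q where q: "\<forall>v\<in>vertices P. order_poly (normal_order P v) UNIV (q v)"
    by (metis bchoice)
  define p where "p = (\<Sum>v\<in>vertices P. q v)"
  have "real (chi P m) = poly p (real m)" for m
    using q by (simp add: chi_eq_sum_vertices[OF P] card_grid_max_face_eq_singleton[OF assms]
        p_def poly_sum order_poly_def)
  moreover have rec: "(-1) ^ CARD('d) * poly p (- real m) = real (\<Sum>y\<in>grid m. card (vertices (max_face P y)))" for m
    using q by (simp add: sum_card_vertices_max_face[OF P] card_grid_in_max_face[OF assms]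
        p_def poly_sum sum_distrib_left order_poly_def)
  moreover have "degree p \<le> CARD('d)"
    using q unfolding p_def order_poly_def by (intro degree_sum_le finite_vertices[OF P]) auto
  moreover have "CARD('d) \<le> degree p"
  proof (rule degree_ge_if_power_le_abs_poly)
    fix m :: nat
    have "real m ^ CARD('d) \<le> (-1) ^ CARD('d) * poly p (- real m)"
      using power_le_sum_card_vertices_max_face[OF P, of m] unfolding rec by (metis of_nat_le_iff of_nat_power)
    also have "\<dots> \<le> \<bar>(-1) ^ CARD('d) * poly p (- real m)\<bar>" by (rule abs_ge_self)
    finally show "real m ^ CARD('d) \<le> \<bar>poly p (- real m)\<bar>" by (simp add: abs_mult)
  qed simp
  ultimately show ?thesis by (intro exI[of _ p]) auto
qed

end
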